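(* Let $K\ge2$, $\varepsilon\in(0,1]$ and $T\ge 3K/32$. In prediction with limited advice with one additional observation per round, for every (possibly randomized) learning algorithm there exists an oblivious loss sequence with losses in $[0,1]$ and effective loss range at most $\varepsilon$ such that the expected regret satisfies $\mathcal{R}_T\ge 0.02\,\varepsilon\sqrt{KT}$; that is, $\inf\sup\mathcal R_T\ge 0.02\varepsilon\sqrt{KT}$, with the infimum over algorithms and the supremum over such oblivious loss sequences.
   Context: Setting: there are $K$ arms, $[K]=\{1,\dots,K\}$, and losses $\ell_t^a\in[0,1]$. In each round $t$ the learner picks a primary arm $A_t\in[K]$, suffers and observes $\ell_t^{A_t}$, and additionally picks a secondary arm $B_t$ and observes, but does not suffer, $\ell_t^{B_t}$; choices may depend on all past observations and internal randomization. An oblivious adversary fixes all losses before the game starts. The effective loss range is the smallest $\varepsilon$ such that $|\ell_t^a-\ell_t^{a'}|\le\varepsilon$ for all $t\le T$ and $a,a'\in[K]$. The expected regret is $\mathcal{R}_T=\mathbb{E}[\sum_{t=1}^T\ell_t^{A_t}]-\min_{a\in[K]}\mathbb{E}[\sum_{t=1}^T\ell_t^a]$. *)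

theory Defs
  imports "HOL-Probability.Probability"
begin

text \<open>Arms are the naturals 1..K; rounds are indexed 0..T-1.
  A loss sequence is l :: nat => nat => real, with l t a the loss of arm a in round t.
  A history entry records (A_s, B_s, loss of A_s, loss of B_s).
  A (possibly randomized) algorithm is given, in round t and history h of the
  observations so far, a probability distribution over pairs (A_t, B_t)
  (primary arm, secondary arm).  Fresh internal randomness in each round
  conditioned on the full observed history (which includes the own past choices)
  is, for a finite horizon with perfect recall, as general as any randomized
  algorithm (Kuhn).\<close>

type_synonym hist = "(nat \<times> nat \<times> real \<times> real) list"
type_synonym algo = "nat \<Rightarrow> hist \<Rightarrow> (nat \<times> nat) pmf"

definition valid_algo :: "nat \<Rightarrow> algo \<Rightarrow> bool" where
  "valid_algo K alg \<longleftrightarrow> (\<forall>t h. set_pmf (alg t h) \<subseteq> {1..K} \<times> {1..K})"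

fun hist_dist :: "algo \<Rightarrow> (nat \<Rightarrow> nat \<Rightarrow> real) \<Rightarrow> nat \<Rightarrow> hist pmf" where
  "hist_dist alg l 0 = return_pmf []"
| "hist_dist alg l (Suc t) =
     bind_pmf (hist_dist alg l t)
       (\<lambda>h. map_pmf (\<lambda>(a, b). h @ [(a, b, l t a, l t b)]) (alg t h))"

definition losses_01 :: "nat \<Rightarrow> nat \<Rightarrow> (nat \<Rightarrow> nat \<Rightarrow> real) \<Rightarrow> bool" where
  "losses_01 K T l \<longleftrightarrow> (\<forall>t<T. \<forall>a\<in>{1..K}. 0 \<le> l t a \<and> l t a \<le> 1)"

definition loss_range_le :: "nat \<Rightarrow> nat \<Rightarrow> (nat \<Rightarrow> nat \<Rightarrow> real) \<Rightarrow> real \<Rightarrow> bool" where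
  "loss_range_le K T l eps \<longleftrightarrow>
     (\<forall>t<T. \<forall>a\<in>{1..K}. \<forall>a'\<in>{1..K}. \<bar>l t a - l t a'\<bar> \<le> eps)"

definition regret :: "nat \<Rightarrow> nat \<Rightarrow> algo \<Rightarrow> (nat \<Rightarrow> nat \<Rightarrow> real) \<Rightarrow> real" where
  "regret K T alg l =
     measure_pmf.expectation (hist_dist alg l T)
       (\<lambda>h. \<Sum>t<T. l t (fst (h ! t)))
     - (MIN a\<in>{1..K}. \<Sum>t<T. l t a)"

end

theory Submission
  imports Defs
begin

text \<open>Yao's principle over \<open>K + 1\<close> random environments. In environment \<open>j \<in> [K]\<close> every loss
  is an independent coin with values \<open>{0, \<epsilon>}\<close>, of mean \<open>\<epsilon>/2\<close> except for arm \<open>j\<close>, whose mean is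
  \<open>\<epsilon>(1/2 - \<delta>)\<close>; in the reference environment \<open>0\<close> all arms have mean \<open>\<epsilon>/2\<close>. The expected regret in
  environment \<open>j\<close> is at least \<open>\<epsilon>\<delta>(T - E\<^sub>j N\<^sub>j)\<close>, where \<open>N\<^sub>j\<close> counts the plays of arm \<open>j\<close>.
  Only observations of arm \<open>j\<close> distinguish environment \<open>j\<close> from \<open>0\<close>, so by the chain rule the
  divergence between the two history distributions is \<open>kl \<cdot> E\<^sub>0 M\<^sub>j\<close>, with \<open>kl = O(\<delta>\<^sup>2)\<close> the
  divergence of one coin and \<open>M\<^sub>j\<close> the number of observations of arm \<open>j\<close>; since \<open>\<Sum>\<^sub>j M\<^sub>j \<le> 2T\<close>, a
  Pinsker-type bound gives \<open>\<Sum>\<^sub>j E\<^sub>j N\<^sub>j \<le> T + O(T \<Sum>\<^sub>j \<delta> \<surd>(E\<^sub>0 M\<^sub>j))\<close>. With \<open>\<delta> = \<surd>(K/T)/16\<close> the average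
  regret over \<open>j\<close> is \<open>\<ge> 0.02 \<epsilon> \<surd>(KT)\<close>, so some loss sequence in the support attains it.\<close>

subsection \<open>Expectations over finite supports\<close>

text \<open>All distributions below have finite support, where this sum is the Bochner expectation
  \<open>measure_pmf.expectation\<close> (\<open>expect_eq_expectation\<close>) but comes without integrability side
  conditions.\<close>

definition expect :: "'a pmf \<Rightarrow> ('a \<Rightarrow> real) \<Rightarrow> real" where
  "expect P f = (\<Sum>x\<in>set_pmf P. pmf P x * f x)"

lemma expect_superset:
  assumes "finite A" "set_pmf P \<subseteq> A"
  shows "expect P f = (\<Sum>x\<in>A. pmf P x * f x)"
  unfolding expect_def using assms
  by (intro sum.mono_neutral_left) (auto simp: set_pmf_eq)

lemma expect_eq_expectation:
  assumes "finite (set_pmf P)"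
  shows "measure_pmf.expectation P f = expect P f"
  unfolding expect_def using assms
  by (subst integral_measure_pmf_real[where A="set_pmf P"]) (auto simp: mult.commute)

lemma expect_cong: "(\<And>x. x \<in> set_pmf P \<Longrightarrow> f x = g x) \<Longrightarrow> expect P f = expect P g"
  unfolding expect_def by (intro sum.cong) auto

lemma expect_const: "finite (set_pmf P) \<Longrightarrow> expect P (\<lambda>_. c) = c"
  unfolding expect_def using sum_pmf_eq_1[of "set_pmf P" P]
  by (simp add: sum_distrib_right[symmetric])

lemma expect_add: "expect P (\<lambda>x. f x + g x) = expect P f + expect P g"
  unfolding expect_def by (simp add: distrib_left sum.distrib)

lemma expect_diff: "expect P (\<lambda>x. f x - g x) = expect P f - expect P g"
  unfolding expect_def by (simp add: right_diff_distrib sum_subtractf)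

lemma expect_cmult: "expect P (\<lambda>x. c * f x) = c * expect P f"
  unfolding expect_def by (simp add: sum_distrib_left algebra_simps)

lemma expect_sum: "expect P (\<lambda>x. \<Sum>i\<in>I. f i x) = (\<Sum>i\<in>I. expect P (f i))"
  unfolding expect_def by (simp add: sum_distrib_left sum.swap[of _ I])

lemma expect_mono: "(\<And>x. x \<in> set_pmf P \<Longrightarrow> f x \<le> g x) \<Longrightarrow> expect P f \<le> expect P g"
  unfolding expect_def by (intro sum_mono mult_left_mono) auto

lemma expect_bounds:
  assumes "finite (set_pmf P)" "\<And>x. x \<in> set_pmf P \<Longrightarrow> a \<le> f x \<and> f x \<le> b"
  shows "a \<le> expect P f \<and> expect P f \<le> b"
  using expect_mono[of P "\<lambda>_. a" f] expect_mono[of P f "\<lambda>_. b"] assms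
  by (simp add: expect_const)

lemma expect_nonneg: "(\<And>x. x \<in> set_pmf P \<Longrightarrow> 0 \<le> f x) \<Longrightarrow> 0 \<le> expect P f"
  unfolding expect_def by (intro sum_nonneg) auto

lemma expect_map:
  assumes "finite (set_pmf P)"
  shows "expect (map_pmf g P) f = expect P (\<lambda>x. f (g x))"
  using assms by (simp add: expect_eq_expectation[symmetric])

lemma pmf_bind_finite:
  assumes "finite (set_pmf P)"
  shows "pmf (bind_pmf P F) y = (\<Sum>x\<in>set_pmf P. pmf P x * pmf (F x) y)"
  using assms by (simp add: pmf_bind expect_eq_expectation expect_def)

lemma expect_bind:
  assumes "finite (set_pmf P)" "\<And>x. x \<in> set_pmf P \<Longrightarrow> finite (set_pmf (F x))"
  shows "expect (bind_pmf P F) g = expect P (\<lambda>x. expect (F x) g)"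
proof -
  let ?S = "set_pmf (bind_pmf P F)"
  have fin: "finite ?S" using assms by auto
  have "expect (bind_pmf P F) g = (\<Sum>y\<in>?S. (\<Sum>x\<in>set_pmf P. pmf P x * pmf (F x) y) * g y)"
    unfolding expect_def using assms(1) by (simp add: pmf_bind_finite)
  also have "\<dots> = (\<Sum>x\<in>set_pmf P. pmf P x * (\<Sum>y\<in>?S. pmf (F x) y * g y))"
    by (simp add: sum_distrib_right sum_distrib_left mult.assoc) (rule sum.swap)
  also have "\<dots> = expect P (\<lambda>x. expect (F x) g)"
    unfolding expect_def[of P]
    by (intro sum.cong refl arg_cong2[where f="(*)"] expect_superset[OF fin, symmetric]) auto
  finally show ?thesis .
qed

lemma exists_ge_expect:
  assumes "finite (set_pmf P)" "expect P f \<ge> B"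
  shows "\<exists>x\<in>set_pmf P. f x \<ge> B"
proof (rule ccontr)
  assume "\<not> ?thesis"
  then have "\<And>x. x \<in> set_pmf P \<Longrightarrow> pmf P x * f x < pmf P x * B"
    by (auto simp: set_pmf_eq' less_le)
  then have "expect P f < (\<Sum>x\<in>set_pmf P. pmf P x * B)"
    unfolding expect_def using assms(1) set_pmf_not_empty by (intro sum_strict_mono) auto
  also have "\<dots> = B" using expect_const[OF assms(1), of B] unfolding expect_def .
  finally show False using assms(2) by simp
qed

lemma exists_ge_average:
  fixes f :: "'a \<Rightarrow> real" and B :: real
  assumes "finite A" "A \<noteq> {}" "card A * B \<le> (\<Sum>x\<in>A. f x)"
  shows "\<exists>x\<in>A. B \<le> f x"
proof (rule ccontr)
  assume "\<not> ?thesis"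
  then have "(\<Sum>x\<in>A. f x) < (\<Sum>x\<in>A. B)" using assms(1,2) by (intro sum_strict_mono) auto
  then show False using assms(3) by simp
qed

lemma sqrt_le_scaled_mean:
  assumes "0 < c" "0 \<le> x"
  shows "sqrt x \<le> (c * x + 1 / c) / 2"
  using arith_geo_mean_sqrt[of "c * x" "1 / c"] assms by simp

lemma Pi_pmf_pair:
  assumes "finite A" "a \<in> A" "b \<in> A"
  shows "map_pmf (\<lambda>v. (v a, v b)) (Pi_pmf A dflt p) =
         bind_pmf (p a) (\<lambda>x. map_pmf (\<lambda>y. (x, y)) (if a = b then return_pmf x else p b))"
proof (cases "a = b")
  case True
  have "map_pmf (\<lambda>v. (v a, v b)) (Pi_pmf A dflt p) = map_pmf (\<lambda>x. (x, x)) (map_pmf (\<lambda>v. v a) (Pi_pmf A dflt p))"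
    using True by (simp add: pmf.map_comp o_def)
  also have "\<dots> = map_pmf (\<lambda>x. (x, x)) (p a)" using assms by (simp add: Pi_pmf_component)
  finally show ?thesis using True by (simp add: map_pmf_def bind_return_pmf)
next
  case False
  have "map_pmf (\<lambda>v. (v a, v b)) (Pi_pmf A dflt p) = map_pmf (\<lambda>v. (v a, v b)) (Pi_pmf {a, b} dflt p)"
    using assms by (subst Pi_pmf_subset[of A "{a, b}"]) (auto simp: pmf.map_comp o_def)
  also have "Pi_pmf {a, b} dflt p = map_pmf (\<lambda>(y, f). f(a := y)) (pair_pmf (p a) (Pi_pmf {b} dflt p))"
    using False by (subst Pi_pmf_insert[symmetric]) auto
  also have "Pi_pmf {b} dflt p = map_pmf (\<lambda>x z. if z = b then x else dflt) (p b)"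
    by (rule Pi_pmf_singleton)
  finally show ?thesis using False
    by (simp add: pmf.map_comp o_def pair_pmf_def map_bind_pmf bind_map_pmf map_pmf_def
        bind_assoc_pmf bind_return_pmf)
qed

subsection \<open>Kullback--Leibler divergence\<close>

text \<open>Only applied to distributions with equal finite supports, where the junk value
  \<open>ln (p / 0) = 0\<close> never arises.\<close>

definition KL :: "'a pmf \<Rightarrow> 'a pmf \<Rightarrow> real" where
  "KL P Q = expect P (\<lambda>x. ln (pmf P x / pmf Q x))"

lemma KL_self [simp]: "KL P P = 0"
  unfolding KL_def expect_def by (intro sum.neutral) (auto simp: set_pmf_eq)

lemma KL_map_inj:
  assumes "inj f" "finite (set_pmf P)"
  shows "KL (map_pmf f P) (map_pmf f Q) = KL P Q"
  unfolding KL_def using assms by (simp add: expect_map pmf_map_inj')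

lemma pmf_bind_tagged:
  assumes fin: "finite (set_pmf P)"
    and tag: "\<And>x y. x \<in> set_pmf P \<Longrightarrow> y \<in> set_pmf (F x) \<Longrightarrow> k y = x"
    and x0: "x0 \<in> set_pmf P" "k y = x0"
  shows "pmf (bind_pmf P F) y = pmf P x0 * pmf (F x0) y"
proof -
  have "pmf (bind_pmf P F) y = (\<Sum>x\<in>set_pmf P. pmf P x * pmf (F x) y)"
    by (rule pmf_bind_finite[OF fin])
  also have "\<dots> = pmf P x0 * pmf (F x0) y + (\<Sum>x\<in>set_pmf P - {x0}. pmf P x * pmf (F x) y)"
    by (rule sum.remove[OF fin x0(1)])
  also have "(\<Sum>x\<in>set_pmf P - {x0}. pmf P x * pmf (F x) y) = 0"
    using tag x0 by (intro sum.neutral) (auto simp: set_pmf_eq)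
  finally show ?thesis by simp
qed

text \<open>Chain rule. The tag \<open>k\<close> reads the first stage off the outcome of the second, so that the
  probability of an outcome of the compound experiment factorises.\<close>

lemma KL_bind_tagged:
  assumes fin: "finite (set_pmf P)"
    and same: "set_pmf Q = set_pmf P"
    and finF: "\<And>x. x \<in> set_pmf P \<Longrightarrow> finite (set_pmf (F x))"
    and sameF: "\<And>x. x \<in> set_pmf P \<Longrightarrow> set_pmf (G x) = set_pmf (F x)"
    and tag: "\<And>x y. x \<in> set_pmf P \<Longrightarrow> y \<in> set_pmf (F x) \<Longrightarrow> k y = x"
  shows "KL (bind_pmf P F) (bind_pmf Q G) = KL P Q + expect P (\<lambda>x. KL (F x) (G x))"
proof -
  have finQ: "finite (set_pmf Q)" using fin same by simp
  have tagG: "\<And>x y. x \<in> set_pmf Q \<Longrightarrow> y \<in> set_pmf (G x) \<Longrightarrow> k y = x"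
    using tag sameF same by auto
  have "KL (bind_pmf P F) (bind_pmf Q G) =
      expect P (\<lambda>x. expect (F x) (\<lambda>y. ln (pmf (bind_pmf P F) y / pmf (bind_pmf Q G) y)))"
    unfolding KL_def by (rule expect_bind[OF fin finF])
  also have "\<dots> = expect P (\<lambda>x. expect (F x) (\<lambda>y. ln (pmf P x / pmf Q x) + ln (pmf (F x) y / pmf (G x) y)))"
  proof (intro expect_cong)
    fix x y assume x: "x \<in> set_pmf P" and y: "y \<in> set_pmf (F x)"
    have xQ: "x \<in> set_pmf Q" and yG: "y \<in> set_pmf (G x)" using x y same sameF by auto
    have kx: "k y = x" using tag x y .
    have "pmf (bind_pmf P F) y = pmf P x * pmf (F x) y"
      using pmf_bind_tagged[where k=k, OF fin tag x kx] .
    moreover have "pmf (bind_pmf Q G) y = pmf Q x * pmf (G x) y"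
      using pmf_bind_tagged[where k=k, OF finQ tagG xQ kx] .
    moreover have "pmf P x > 0" "pmf Q x > 0" "pmf (F x) y > 0" "pmf (G x) y > 0"
      using x xQ y yG by (auto simp: set_pmf_eq' less_le)
    ultimately show "ln (pmf (bind_pmf P F) y / pmf (bind_pmf Q G) y) =
        ln (pmf P x / pmf Q x) + ln (pmf (F x) y / pmf (G x) y)"
      by (simp add: ln_mult ln_div)
  qed
  also have "\<dots> = KL P Q + expect P (\<lambda>x. KL (F x) (G x))"
    unfolding KL_def by (simp add: expect_add expect_const finF cong: expect_cong)
  finally show ?thesis .
qed

definition bhattacharyya :: "'a pmf \<Rightarrow> 'a pmf \<Rightarrow> real" where
  "bhattacharyya P Q = (\<Sum>x\<in>set_pmf P. sqrt (pmf P x * pmf Q x))"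

context
  fixes P Q :: "'a pmf"
  assumes finite_support: "finite (set_pmf P)" and same_support: "set_pmf Q = set_pmf P"
begin

lemma pmf_pos_on_same_support: "x \<in> set_pmf P \<Longrightarrow> 0 < pmf P x \<and> 0 < pmf Q x"
  using same_support by (auto simp: set_pmf_eq' less_le)

lemma sum_pmf_same_support: "(\<Sum>x\<in>set_pmf P. pmf P x) = 1" "(\<Sum>x\<in>set_pmf P. pmf Q x) = 1"
  using finite_support same_support by (auto intro: sum_pmf_eq_1)

lemma expect_diff_le_half_l1:
  assumes "\<And>x. x \<in> set_pmf P \<Longrightarrow> 0 \<le> f x \<and> f x \<le> 1"
  shows "expect Q f - expect P f \<le> (\<Sum>x\<in>set_pmf P. \<bar>pmf Q x - pmf P x\<bar>) / 2"
proof -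
  have "expect Q f - expect P f = (\<Sum>x\<in>set_pmf P. (pmf Q x - pmf P x) * f x)"
    unfolding expect_def same_support by (simp add: sum_subtractf left_diff_distrib)
  also have "\<dots> \<le> (\<Sum>x\<in>set_pmf P. ((pmf Q x - pmf P x) + \<bar>pmf Q x - pmf P x\<bar>) / 2)"
  proof (rule sum_mono)
    fix x assume "x \<in> set_pmf P"
    with assms have "0 \<le> f x" "f x \<le> 1" by auto
    show "(pmf Q x - pmf P x) * f x \<le> ((pmf Q x - pmf P x) + \<bar>pmf Q x - pmf P x\<bar>) / 2"
    proof (cases "pmf Q x \<ge> pmf P x")
      case True
      then have "(pmf Q x - pmf P x) * f x \<le> pmf Q x - pmf P x"
        using \<open>f x \<le> 1\<close> by (intro mult_left_le) auto
      with True show ?thesis by simp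
    next
      case False
      then have "(pmf Q x - pmf P x) * f x \<le> 0"
        using \<open>0 \<le> f x\<close> by (intro mult_nonpos_nonneg) auto
      with False show ?thesis by simp
    qed
  qed
  also have "\<dots> = (\<Sum>x\<in>set_pmf P. \<bar>pmf Q x - pmf P x\<bar>) / 2"
    by (simp add: sum_divide_distrib[symmetric] sum.distrib sum_subtractf sum_pmf_same_support)
  finally show ?thesis .
qed

lemma bhattacharyya_bounds: "0 \<le> bhattacharyya P Q" "bhattacharyya P Q \<le> 1"
proof -
  show "0 \<le> bhattacharyya P Q" unfolding bhattacharyya_def by (intro sum_nonneg) simp
  have "bhattacharyya P Q \<le> (\<Sum>x\<in>set_pmf P. (pmf P x + pmf Q x) / 2)"
    unfolding bhattacharyya_def by (intro sum_mono arith_geo_mean_sqrt) auto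
  also have "\<dots> = 1"
    by (simp add: sum_divide_distrib[symmetric] sum.distrib sum_pmf_same_support)
  finally show "bhattacharyya P Q \<le> 1" .
qed

lemma l1_sq_le_bhattacharyya:
  "(\<Sum>x\<in>set_pmf P. \<bar>pmf Q x - pmf P x\<bar>)\<^sup>2 \<le> (2 - 2 * bhattacharyya P Q) * (2 + 2 * bhattacharyya P Q)"
proof -
  define p q where "p = (\<lambda>x. sqrt (pmf P x))" and "q = (\<lambda>x. sqrt (pmf Q x))"
  have sq: "pmf P x = (p x)\<^sup>2" "pmf Q x = (q x)\<^sup>2" for x
    unfolding p_def q_def by simp_all
  have bc: "bhattacharyya P Q = (\<Sum>x\<in>set_pmf P. p x * q x)"
    unfolding bhattacharyya_def p_def q_def by (simp add: real_sqrt_mult)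
  have sums: "(\<Sum>x\<in>set_pmf P. (p x)\<^sup>2) = 1" "(\<Sum>x\<in>set_pmf P. (q x)\<^sup>2) = 1"
    using sum_pmf_same_support unfolding sq .
  have "(\<Sum>x\<in>set_pmf P. \<bar>pmf Q x - pmf P x\<bar>) = (\<Sum>x\<in>set_pmf P. \<bar>q x - p x\<bar> * (q x + p x))"
  proof (rule sum.cong[OF refl])
    fix x
    have "pmf Q x - pmf P x = (q x - p x) * (q x + p x)"
      unfolding sq by (simp add: power2_eq_square algebra_simps)
    moreover have "0 \<le> q x + p x" unfolding p_def q_def by simp
    ultimately show "\<bar>pmf Q x - pmf P x\<bar> = \<bar>q x - p x\<bar> * (q x + p x)"
      by (simp add: abs_mult)
  qed
  also have "(\<dots>)\<^sup>2 \<le> (\<Sum>x\<in>set_pmf P. \<bar>q x - p x\<bar>\<^sup>2) * (\<Sum>x\<in>set_pmf P. (q x + p x)\<^sup>2)"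
    by (rule Cauchy_Schwarz_ineq_sum)
  also have "(\<Sum>x\<in>set_pmf P. \<bar>q x - p x\<bar>\<^sup>2) = 2 - 2 * bhattacharyya P Q"
    unfolding bc by (simp add: sums power2_diff sum.distrib sum_subtractf sum_distrib_left mult_ac)
  also have "(\<Sum>x\<in>set_pmf P. (q x + p x)\<^sup>2) = 2 + 2 * bhattacharyya P Q"
    unfolding bc by (simp add: sums power2_sum sum.distrib sum_distrib_left mult_ac)
  finally show ?thesis .
qed

lemma two_minus_two_bhattacharyya_le_KL: "2 - 2 * bhattacharyya P Q \<le> KL P Q"
proof -
  have "(\<Sum>x\<in>set_pmf P. 2 * (pmf P x - sqrt (pmf P x * pmf Q x))) \<le>
      (\<Sum>x\<in>set_pmf P. pmf P x * ln (pmf P x / pmf Q x))"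
  proof (rule sum_mono)
    fix x assume "x \<in> set_pmf P"
    then have p: "0 < pmf P x" and q: "0 < pmf Q x" using pmf_pos_on_same_support by auto
    define r where "r = sqrt (pmf Q x) / sqrt (pmf P x)"
    have "ln (pmf P x / pmf Q x) = - 2 * ln r"
      using p q unfolding r_def by (simp add: ln_div ln_sqrt)
    moreover have "ln r \<le> r - 1" using p q unfolding r_def by (intro ln_le_minus_one) simp
    ultimately have "pmf P x * (2 - 2 * r) \<le> pmf P x * ln (pmf P x / pmf Q x)"
      using p by (intro mult_left_mono) auto
    moreover have "pmf P x * r = sqrt (pmf P x * pmf Q x)"
      using p unfolding r_def by (simp add: real_sqrt_mult field_simps)
    ultimately show "2 * (pmf P x - sqrt (pmf P x * pmf Q x)) \<le> pmf P x * ln (pmf P x / pmf Q x)"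
      by (simp add: algebra_simps)
  qed
  then show ?thesis
    unfolding KL_def expect_def bhattacharyya_def
    by (simp add: sum_subtractf sum_distrib_left[symmetric] sum_pmf_same_support)
qed

text \<open>A Pinsker-type inequality, obtained through the Hellinger distance.\<close>

lemma expect_diff_le_sqrt_KL:
  assumes "\<And>x. x \<in> set_pmf P \<Longrightarrow> 0 \<le> f x \<and> f x \<le> 1"
  shows "expect Q f - expect P f \<le> sqrt (KL P Q)"
proof -
  define D where "D = (\<Sum>x\<in>set_pmf P. \<bar>pmf Q x - pmf P x\<bar>)"
  have "D\<^sup>2 \<le> (2 - 2 * bhattacharyya P Q) * (2 + 2 * bhattacharyya P Q)"
    using l1_sq_le_bhattacharyya unfolding D_def .
  also have "\<dots> \<le> (2 - 2 * bhattacharyya P Q) * 4"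
    using bhattacharyya_bounds by (intro mult_left_mono) auto
  also have "\<dots> \<le> 4 * KL P Q" using two_minus_two_bhattacharyya_le_KL by simp
  finally have "D \<le> 2 * sqrt (KL P Q)"
    using real_le_rsqrt[of D "4 * KL P Q"] by (simp add: real_sqrt_mult)
  then show ?thesis using expect_diff_le_half_l1[of f, OF assms] unfolding D_def by simp
qed

end

subsection \<open>The hard environments\<close>

lemma hist_dist_cong: "(\<And>s. s < t \<Longrightarrow> l' s = l s) \<Longrightarrow> hist_dist alg l' t = hist_dist alg l t"
  by (induction t) auto

lemma finite_hist_dist [simp]:
  assumes "valid_algo K alg"
  shows "finite (set_pmf (hist_dist alg l t))"
proof (induction t)
  case (Suc t)
  have "set_pmf (alg t h) \<subseteq> {1..K} \<times> {1..K}" for h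
    using assms unfolding valid_algo_def by blast
  then have "finite (set_pmf (alg t h))" for h
    by (rule finite_subset) simp
  with Suc show ?case by (auto simp: split_beta)
qed simp

lemma hist_dist_support:
  "h \<in> set_pmf (hist_dist alg l t) \<Longrightarrow> length h = t \<and> (\<forall>s<t. fst (snd (snd (h ! s))) = l s (fst (h ! s)))"
proof (induction t arbitrary: h)
  case (Suc t)
  then obtain h' a b where "h' \<in> set_pmf (hist_dist alg l t)" and "h = h' @ [(a, b, l t a, l t b)]"
    by (auto simp: split_beta)
  with Suc.IH show ?case by (auto simp: nth_append less_Suc_eq)
qed simp

locale hard_environments =
  fixes K :: nat and alg :: algo and e d :: real
  assumes valid: "valid_algo K alg" and e_pos: "0 < e" and d_pos: "0 < d" and d_lt_half: "d < 1/2"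
begin

definition coin :: "real \<Rightarrow> real pmf" where
  "coin p = map_pmf (\<lambda>b. if b then e else 0) (bernoulli_pmf p)"

text \<open>Arms are numbered from \<open>1\<close>, so \<open>arm_loss 0\<close> makes every arm a fair coin: index \<open>0\<close> is the
  reference environment.\<close>

definition arm_loss :: "nat \<Rightarrow> nat \<Rightarrow> real pmf" where
  "arm_loss j a = coin (if a = j then 1/2 - d else 1/2)"

definition loss_vec :: "nat \<Rightarrow> (nat \<Rightarrow> real) pmf" where
  "loss_vec j = Pi_pmf {1..K} 0 (arm_loss j)"

primrec loss_seq :: "nat \<Rightarrow> nat \<Rightarrow> (nat \<Rightarrow> nat \<Rightarrow> real) pmf" where
  "loss_seq j 0 = return_pmf (\<lambda>_ _. 0)"
| "loss_seq j (Suc t) = bind_pmf (loss_seq j t) (\<lambda>l. map_pmf (\<lambda>v. l(t := v)) (loss_vec j))"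

text \<open>Instead of the whole loss vector, a round only draws the two observed losses, with fresh
  coins; \<open>round_step_via_loss_vec\<close> and \<open>bind_loss_seq_hist_dist\<close> show that this is the same
  as playing against a loss sequence drawn from \<open>loss_seq j\<close>.\<close>

definition observe :: "nat \<Rightarrow> hist \<Rightarrow> nat \<Rightarrow> nat \<Rightarrow> hist pmf" where
  "observe j h a b = bind_pmf (arm_loss j a)
     (\<lambda>x. map_pmf (\<lambda>y. h @ [(a, b, x, y)]) (if a = b then return_pmf x else arm_loss j b))"

definition round_step :: "nat \<Rightarrow> nat \<Rightarrow> hist \<Rightarrow> hist pmf" where
  "round_step j t h = bind_pmf (alg t h) (\<lambda>(a, b). observe j h a b)"

primrec env_hist :: "nat \<Rightarrow> nat \<Rightarrow> hist pmf" where
  "env_hist j 0 = return_pmf []"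
| "env_hist j (Suc t) = bind_pmf (env_hist j t) (round_step j t)"

definition play_prob :: "nat \<Rightarrow> nat \<Rightarrow> hist \<Rightarrow> real" where
  "play_prob j t h = expect (alg t h) (\<lambda>(a, b). if a = j then 1 else 0)"

definition obs_prob :: "nat \<Rightarrow> nat \<Rightarrow> hist \<Rightarrow> real" where
  "obs_prob j t h = expect (alg t h) (\<lambda>(a, b). if a = j \<or> b = j then 1 else 0)"

definition expected_plays :: "nat \<Rightarrow> nat \<Rightarrow> nat \<Rightarrow> real" where
  "expected_plays i j t = (\<Sum>s<t. expect (env_hist i s) (play_prob j s))"

definition expected_obs :: "nat \<Rightarrow> nat \<Rightarrow> real" where
  "expected_obs j t = (\<Sum>s<t. expect (env_hist 0 s) (obs_prob j s))"

definition hist_loss :: "nat \<Rightarrow> hist \<Rightarrow> real" where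
  "hist_loss t h = (\<Sum>s<t. fst (snd (snd (h ! s))))"

definition kl_coin :: real where
  "kl_coin = KL (coin (1/2)) (coin (1/2 - d))"

lemma set_arm_loss [simp]: "set_pmf (arm_loss j a) = {0, e}"
  using d_pos d_lt_half unfolding arm_loss_def coin_def by (auto simp: UNIV_bool)

lemma alg_support: "set_pmf (alg t h) \<subseteq> {1..K} \<times> {1..K}"
  using valid unfolding valid_algo_def by blast

lemma finite_alg [simp]: "finite (set_pmf (alg t h))"
  by (rule finite_subset[OF alg_support]) auto

lemma set_observe:
  "set_pmf (observe j h a b) = (\<Union>x\<in>{0, e}. (\<lambda>y. h @ [(a, b, x, y)]) ` (if a = b then {x} else {0, e}))"
  unfolding observe_def by (auto split: if_splits)

lemma finite_observe [simp]: "finite (set_pmf (observe j h a b))"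
  unfolding set_observe by auto

lemma set_round_step_env_indep: "set_pmf (round_step j t h) = set_pmf (round_step j' t h)"
  unfolding round_step_def by (simp add: set_observe split_beta)

lemma finite_round_step [simp]: "finite (set_pmf (round_step j t h))"
  unfolding round_step_def by (auto simp: split_beta)

lemma round_step_snoc: "y \<in> set_pmf (round_step j t h) \<Longrightarrow> \<exists>z. y = h @ [z]"
  unfolding round_step_def by (auto simp: set_observe split: if_splits)

lemma finite_env_hist [simp]: "finite (set_pmf (env_hist j t))"
  by (induction t) auto

lemma set_env_hist_env_indep: "set_pmf (env_hist j t) = set_pmf (env_hist j' t)"
  by (induction t) (auto simp: set_round_step_env_indep[of j _ _ j'])

lemma length_env_hist: "h \<in> set_pmf (env_hist j t) \<Longrightarrow> length h = t"
  by (induction t arbitrary: h) (auto dest!: round_step_snoc)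

subsection \<open>Divergence from the reference environment\<close>

lemma KL_arm_loss:
  assumes "j \<noteq> 0" "a \<noteq> 0"
  shows "KL (arm_loss 0 a) (arm_loss j a) = (if a = j then kl_coin else 0)"
  using assms unfolding arm_loss_def kl_coin_def by auto

lemma KL_observe:
  assumes "j \<noteq> 0" "a \<noteq> 0" "b \<noteq> 0"
  shows "KL (observe 0 h a b) (observe j h a b) = kl_coin * (if a = j \<or> b = j then 1 else 0)"
proof -
  have inj: "inj (\<lambda>y. h @ [(a, b, x, y)])" for x by (auto simp: inj_def)
  have "KL (observe 0 h a b) (observe j h a b) = KL (arm_loss 0 a) (arm_loss j a) +
      expect (arm_loss 0 a) (\<lambda>x. if a = b then 0 else KL (arm_loss 0 b) (arm_loss j b))"
    unfolding observe_def
    by (subst KL_bind_tagged[where k="\<lambda>y. fst (snd (snd (last y)))"])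
      (auto simp: KL_map_inj[OF inj] cong: expect_cong)
  then show ?thesis using assms by (simp add: expect_const KL_arm_loss)
qed

lemma KL_round_step:
  assumes "j \<noteq> 0"
  shows "KL (round_step 0 t h) (round_step j t h) = kl_coin * obs_prob j t h"
proof -
  have "KL (round_step 0 t h) (round_step j t h) =
      expect (alg t h) (\<lambda>x. KL (observe 0 h (fst x) (snd x)) (observe j h (fst x) (snd x)))"
    unfolding round_step_def
    by (subst KL_bind_tagged[where k="\<lambda>y. (fst (last y), fst (snd (last y)))"])
      (auto simp: set_observe split_beta split: if_splits)
  also have "\<dots> = expect (alg t h) (\<lambda>(a, b). kl_coin * (if a = j \<or> b = j then 1 else 0))"
  proof (rule expect_cong)
    fix x assume "x \<in> set_pmf (alg t h)"
    then have "fst x \<noteq> 0" "snd x \<noteq> 0" using alg_support by force+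
    then show "KL (observe 0 h (fst x) (snd x)) (observe j h (fst x) (snd x)) =
        (\<lambda>(a, b). kl_coin * (if a = j \<or> b = j then 1 else 0)) x"
      using KL_observe[OF assms] by (simp add: split_beta)
  qed
  also have "\<dots> = kl_coin * obs_prob j t h"
    unfolding obs_prob_def expect_cmult[symmetric] by (simp add: case_prod_beta')
  finally show ?thesis .
qed

lemma KL_env_hist:
  assumes "j \<noteq> 0"
  shows "KL (env_hist 0 t) (env_hist j t) = kl_coin * expected_obs j t"
proof (induction t)
  case (Suc t)
  have "KL (env_hist 0 (Suc t)) (env_hist j (Suc t)) =
      KL (env_hist 0 t) (env_hist j t) + expect (env_hist 0 t) (\<lambda>h. KL (round_step 0 t h) (round_step j t h))"
    unfolding env_hist.simps
    by (rule KL_bind_tagged[where k=butlast])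
      (auto simp: set_env_hist_env_indep[of j _ 0] set_round_step_env_indep[of j _ _ 0]
        dest!: round_step_snoc)
  with Suc show ?case
    by (simp add: KL_round_step[OF assms] expect_cmult expected_obs_def distrib_left)
qed (simp add: expected_obs_def)

lemma expect_arm_loss: "expect (arm_loss j a) (\<lambda>x. x) = e / 2 - e * d * (if a = j then 1 else 0)"
proof -
  have "expect (arm_loss j a) (\<lambda>x. x) = (\<Sum>b\<in>UNIV. pmf (bernoulli_pmf (if a = j then 1/2 - d else 1/2)) b * (if b then e else 0))"
    unfolding arm_loss_def coin_def by (simp add: expect_map expect_superset)
  also have "\<dots> = e / 2 - e * d * (if a = j then 1 else 0)"
    using d_pos d_lt_half by (simp add: UNIV_bool algebra_simps)
  finally show ?thesis .
qed

lemma expect_round_step_loss: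
  assumes "length h = t"
  shows "expect (round_step j t h) (\<lambda>y. fst (snd (snd (y ! t)))) = e / 2 - e * d * play_prob j t h"
proof -
  have "expect (observe j h a b) (\<lambda>y. fst (snd (snd (y ! t)))) = e / 2 - e * d * (if a = j then 1 else 0)" for a b
    using assms unfolding observe_def
    by (simp add: expect_bind expect_map expect_const nth_append expect_arm_loss cong: expect_cong)
  then have "expect (round_step j t h) (\<lambda>y. fst (snd (snd (y ! t)))) =
      expect (alg t h) (\<lambda>x. e / 2 - e * d * (\<lambda>(a, b). if a = j then 1 else 0) x)"
    unfolding round_step_def by (simp add: expect_bind split_beta)
  then show ?thesis unfolding play_prob_def by (simp add: expect_diff expect_const expect_cmult)
qed

lemma expect_hist_loss: "expect (env_hist j t) (hist_loss t) = e * t / 2 - e * d * expected_plays j j t"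
proof (induction t)
  case (Suc t)
  have "expect (round_step j t h) (hist_loss (Suc t)) = hist_loss t h + (e / 2 - e * d * play_prob j t h)"
    if "h \<in> set_pmf (env_hist j t)" for h
  proof -
    have len: "length h = t" using that by (rule length_env_hist)
    have "hist_loss (Suc t) y = hist_loss t h + fst (snd (snd (y ! t)))"
      if "y \<in> set_pmf (round_step j t h)" for y
      using round_step_snoc[OF that] len unfolding hist_loss_def
      by (auto simp: nth_append intro!: sum.cong)
    then show ?thesis
      by (simp add: expect_add expect_const expect_round_step_loss len cong: expect_cong)
  qed
  then have "expect (env_hist j (Suc t)) (hist_loss (Suc t)) =
      expect (env_hist j t) (\<lambda>h. hist_loss t h + (e / 2 - e * d * play_prob j t h))"
    unfolding env_hist.simps by (subst expect_bind) (auto intro: expect_cong)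
  with Suc show ?case
    by (simp add: expect_add expect_diff expect_const expect_cmult expected_plays_def algebra_simps)
qed (simp add: hist_loss_def expected_plays_def expect_const)

lemma round_step_via_loss_vec:
  "round_step j t h = bind_pmf (alg t h) (\<lambda>(a, b). map_pmf (\<lambda>v. h @ [(a, b, v a, v b)]) (loss_vec j))"
  unfolding round_step_def
proof (intro bind_pmf_cong refl)
  fix x assume x: "x \<in> set_pmf (alg t h)"
  obtain a b where ab: "x = (a, b)" by (cases x)
  with x have "a \<in> {1..K}" "b \<in> {1..K}" using alg_support by blast+
  then have "map_pmf (\<lambda>v. (v a, v b)) (loss_vec j) =
      bind_pmf (arm_loss j a) (\<lambda>x. map_pmf (\<lambda>y. (x, y)) (if a = b then return_pmf x else arm_loss j b))"
    unfolding loss_vec_def by (intro Pi_pmf_pair) auto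
  then have "map_pmf (\<lambda>(x, y). h @ [(a, b, x, y)]) (map_pmf (\<lambda>v. (v a, v b)) (loss_vec j)) = observe j h a b"
    unfolding observe_def by (simp add: map_bind_pmf pmf.map_comp o_def)
  then show "(\<lambda>(a, b). observe j h a b) x = (\<lambda>(a, b). map_pmf (\<lambda>v. h @ [(a, b, v a, v b)]) (loss_vec j)) x"
    unfolding ab by (simp add: pmf.map_comp o_def)
qed

lemma bind_loss_vec_round:
  "bind_pmf (loss_vec j) (\<lambda>v. map_pmf (\<lambda>(a, b). h @ [(a, b, v a, v b)]) (alg t h)) = round_step j t h"
proof -
  have "bind_pmf (loss_vec j) (\<lambda>v. map_pmf (\<lambda>(a, b). h @ [(a, b, v a, v b)]) (alg t h)) =
      bind_pmf (alg t h) (\<lambda>x. bind_pmf (loss_vec j) (\<lambda>v. return_pmf ((\<lambda>(a, b). h @ [(a, b, v a, v b)]) x)))"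
    unfolding map_pmf_def by (rule bind_commute_pmf)
  also have "\<dots> = round_step j t h"
    unfolding round_step_via_loss_vec map_pmf_def by (intro bind_pmf_cong refl) (auto simp: split_beta)
  finally show ?thesis .
qed

lemma bind_loss_seq_hist_dist: "bind_pmf (loss_seq j t) (\<lambda>l. hist_dist alg l t) = env_hist j t"
proof (induction t)
  case (Suc t)
  have "hist_dist alg (l(t := v)) (Suc t) =
      bind_pmf (hist_dist alg l t) (\<lambda>h. map_pmf (\<lambda>(a, b). h @ [(a, b, v a, v b)]) (alg t h))" for l v
    using hist_dist_cong[of t "l(t := v)" l alg] by simp
  then have "bind_pmf (loss_seq j (Suc t)) (\<lambda>l. hist_dist alg l (Suc t)) =
      bind_pmf (loss_seq j t) (\<lambda>l. bind_pmf (hist_dist alg l t) (\<lambda>h.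
        bind_pmf (loss_vec j) (\<lambda>v. map_pmf (\<lambda>(a, b). h @ [(a, b, v a, v b)]) (alg t h))))"
    by (simp add: bind_assoc_pmf bind_map_pmf bind_commute_pmf[of "loss_vec j"])
  also have "\<dots> = bind_pmf (bind_pmf (loss_seq j t) (\<lambda>l. hist_dist alg l t)) (round_step j t)"
    by (simp add: bind_loss_vec_round bind_assoc_pmf)
  finally show ?case using Suc by simp
qed (simp add: bind_return_pmf)

lemma finite_loss_vec [simp]: "finite (set_pmf (loss_vec j))"
  unfolding loss_vec_def
  by (rule finite_subset[OF set_Pi_pmf_subset']) auto

lemma finite_loss_seq [simp]: "finite (set_pmf (loss_seq j t))"
  by (induction t) auto

lemma loss_seq_values: "l \<in> set_pmf (loss_seq j t) \<Longrightarrow> l s a = 0 \<or> l s a = e"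
proof (induction t arbitrary: l)
  case (Suc t)
  then obtain l' v where "l' \<in> set_pmf (loss_seq j t)" "v \<in> set_pmf (loss_vec j)" "l = l'(t := v)"
    by auto
  moreover have "v a = 0 \<or> v a = e" if "v \<in> set_pmf (loss_vec j)" for v
    using set_Pi_pmf_subset'[of "{1..K}" 0 "arm_loss j"] that
    unfolding loss_vec_def PiE_dflt_def by (cases "a \<in> {1..K}") force+
  ultimately show ?case using Suc.IH by auto
qed simp

lemma loss_seq_admissible:
  assumes "l \<in> set_pmf (loss_seq j t)" "e \<le> 1"
  shows "losses_01 K T l \<and> loss_range_le K T l e"
proof -
  have vals: "l s a = 0 \<or> l s a = e" for s a
    using loss_seq_values[OF assms(1)] .
  have "0 \<le> l s a \<and> l s a \<le> 1" "\<bar>l s a - l s a'\<bar> \<le> e" for s a a'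
    using vals[of s a] vals[of s a'] e_pos assms(2) by auto
  then show ?thesis unfolding losses_01_def loss_range_le_def by blast
qed

lemma expect_loss_seq_arm:
  assumes "j \<in> {1..K}"
  shows "expect (loss_seq j t) (\<lambda>l. \<Sum>s<t. l s j) = t * (e / 2 - e * d)"
proof (induction t)
  case (Suc t)
  have "map_pmf (\<lambda>v. v j) (loss_vec j) = arm_loss j j"
    unfolding loss_vec_def using assms by (simp add: Pi_pmf_component)
  moreover have "expect (loss_vec j) (\<lambda>v. v j) = expect (map_pmf (\<lambda>v. v j) (loss_vec j)) (\<lambda>x. x)"
    by (simp add: expect_map)
  ultimately have arm: "expect (loss_vec j) (\<lambda>v. v j) = e / 2 - e * d"
    by (simp add: expect_arm_loss)
  have "expect (loss_seq j (Suc t)) (\<lambda>l. \<Sum>s<Suc t. l s j) =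
      expect (loss_seq j t) (\<lambda>l. expect (map_pmf (\<lambda>v. l(t := v)) (loss_vec j)) (\<lambda>l. \<Sum>s<Suc t. l s j))"
    unfolding loss_seq.simps by (rule expect_bind) auto
  also have "\<dots> = expect (loss_seq j t) (\<lambda>l. (\<Sum>s<t. l s j) + (e / 2 - e * d))"
    by (intro expect_cong) (simp add: expect_map expect_add expect_const arm)
  also have "\<dots> = Suc t * (e / 2 - e * d)"
    using Suc by (simp only: expect_add expect_const finite_loss_seq) (simp add: algebra_simps)
  finally show ?case .
qed (simp add: expect_const)

lemma regret_ge:
  assumes "j \<in> {1..K}"
  shows "regret K T alg l \<ge> expect (hist_dist alg l T) (hist_loss T) - (\<Sum>s<T. l s j)"
proof -
  have "measure_pmf.expectation (hist_dist alg l T) (\<lambda>h. \<Sum>t<T. l t (fst (h ! t))) =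
      expect (hist_dist alg l T) (hist_loss T)"
    unfolding expect_eq_expectation[OF finite_hist_dist[OF valid]] hist_loss_def
    by (intro expect_cong sum.cong refl) (simp add: hist_dist_support)
  moreover have "(MIN a\<in>{1..K}. \<Sum>t<T. l t a) \<le> (\<Sum>s<T. l s j)"
    using assms by (intro Min_le) auto
  ultimately show ?thesis unfolding regret_def by linarith
qed

lemma expect_regret_ge:
  assumes "j \<in> {1..K}"
  shows "expect (loss_seq j T) (regret K T alg) \<ge> e * d * (T - expected_plays j j T)"
proof -
  have "expect (loss_seq j T) (regret K T alg) \<ge>
      expect (loss_seq j T) (\<lambda>l. expect (hist_dist alg l T) (hist_loss T) - (\<Sum>s<T. l s j))"
    using assms by (intro expect_mono regret_ge)
  also have "expect (loss_seq j T) (\<lambda>l. expect (hist_dist alg l T) (hist_loss T) - (\<Sum>s<T. l s j)) =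
      expect (bind_pmf (loss_seq j T) (\<lambda>l. hist_dist alg l T)) (hist_loss T) - T * (e / 2 - e * d)"
    using valid by (simp add: expect_diff expect_bind expect_loss_seq_arm[OF assms])
  also have "\<dots> = e * d * (T - expected_plays j j T)"
    by (simp add: bind_loss_seq_hist_dist expect_hist_loss algebra_simps)
  finally show ?thesis .
qed

lemma kl_coin_eq: "kl_coin = ln (1 / (1 - 4 * d\<^sup>2)) / 2"
proof -
  have inj: "inj (\<lambda>b. if b then e else 0)" using e_pos by (auto simp: inj_def split: if_splits)
  have "kl_coin = KL (bernoulli_pmf (1/2)) (bernoulli_pmf (1/2 - d))"
    unfolding kl_coin_def coin_def by (rule KL_map_inj[OF inj]) simp
  also have "\<dots> = (ln ((1/2) / (1/2 - d)) + ln ((1/2) / (1/2 + d))) / 2"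
    using d_pos d_lt_half unfolding KL_def by (simp add: expect_superset[of UNIV] UNIV_bool)
  also have "\<dots> = ln (((1/2) / (1/2 - d)) * ((1/2) / (1/2 + d))) / 2"
    using d_pos d_lt_half by (subst ln_mult) auto
  also have "((1/2) / (1/2 - d)) * ((1/2) / (1/2 + d)) = 1 / (1 - 4 * d\<^sup>2)"
    using d_pos d_lt_half by (simp add: field_simps power2_eq_square)
  finally show ?thesis .
qed

lemma kl_coin_bounds:
  assumes "d\<^sup>2 \<le> 1/24"
  shows "0 \<le> kl_coin" "kl_coin \<le> 12/5 * d\<^sup>2"
proof -
  have q: "5/6 \<le> 1 - 4 * d\<^sup>2" "1 - 4 * d\<^sup>2 \<le> 1" using assms by auto
  then show "0 \<le> kl_coin" unfolding kl_coin_eq by simp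
  have "ln (1 / (1 - 4 * d\<^sup>2)) \<le> 1 / (1 - 4 * d\<^sup>2) - 1" using q by (intro ln_le_minus_one) simp
  also have "\<dots> = 4 * d\<^sup>2 / (1 - 4 * d\<^sup>2)" using q by (simp add: field_simps)
  also have "\<dots> \<le> 4 * d\<^sup>2 / (5/6)" using q by (intro divide_left_mono) auto
  finally show "kl_coin \<le> 12/5 * d\<^sup>2" unfolding kl_coin_eq by simp
qed

lemma play_prob_bounds: "0 \<le> play_prob j t h \<and> play_prob j t h \<le> 1"
  unfolding play_prob_def by (intro expect_bounds) (auto simp: split_beta)

lemma sum_play_prob: "(\<Sum>j\<in>{1..K}. play_prob j t h) = 1"
proof -
  have "(\<Sum>j\<in>{1..K}. play_prob j t h) =
      expect (alg t h) (\<lambda>x. \<Sum>j\<in>{1..K}. (\<lambda>(a, b). if a = j then 1 else 0) x)"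
    unfolding play_prob_def by (rule expect_sum[symmetric])
  also have "\<dots> = expect (alg t h) (\<lambda>_. 1)"
  proof (rule expect_cong)
    fix x assume "x \<in> set_pmf (alg t h)"
    then have "fst x \<in> {1..K}" using alg_support by force
    then show "(\<Sum>j\<in>{1..K}. (\<lambda>(a, b). if a = j then 1 else (0::real)) x) = 1"
      by (simp add: split_beta)
  qed
  finally show ?thesis by (simp add: expect_const)
qed

lemma sum_obs_prob_le: "(\<Sum>j\<in>{1..K}. obs_prob j t h) \<le> 2"
proof -
  have "(\<Sum>j\<in>{1..K}. obs_prob j t h) =
      expect (alg t h) (\<lambda>x. \<Sum>j\<in>{1..K}. (\<lambda>(a, b). if a = j \<or> b = j then 1 else 0) x)"
    unfolding obs_prob_def by (rule expect_sum[symmetric])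
  also have "\<dots> \<le> expect (alg t h) (\<lambda>_. 2)"
  proof (rule expect_mono)
    fix x :: "nat \<times> nat"
    have "(\<Sum>j\<in>{1..K}. (\<lambda>(a, b). if a = j \<or> b = j then 1 else 0) x) \<le>
        (\<Sum>j\<in>{1..K}. (if fst x = j then 1 else 0) + (if snd x = j then 1 else (0::real)))"
      by (intro sum_mono) (auto simp: split_beta)
    also have "\<dots> \<le> 2" by (simp add: sum.distrib)
    finally show "(\<Sum>j\<in>{1..K}. (\<lambda>(a, b). if a = j \<or> b = j then 1 else 0) x) \<le> (2::real)" .
  qed
  finally show ?thesis by (simp add: expect_const)
qed

lemma obs_prob_nonneg: "0 \<le> obs_prob j t h"
  unfolding obs_prob_def by (intro expect_nonneg) (auto simp: split_beta)

lemma expected_obs_mono: "s \<le> t \<Longrightarrow> expected_obs j s \<le> expected_obs j t"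
  unfolding expected_obs_def by (intro sum_mono2 expect_nonneg obs_prob_nonneg) auto

lemma expected_plays_le:
  assumes "j \<in> {1..K}" "0 \<le> kl_coin"
  shows "expected_plays j j T \<le> expected_plays 0 j T + T * sqrt (kl_coin * expected_obs j T)"
proof -
  have "expect (env_hist j s) (play_prob j s) \<le> expect (env_hist 0 s) (play_prob j s) + sqrt (kl_coin * expected_obs j T)"
    if "s < T" for s
  proof -
    have "expect (env_hist j s) (play_prob j s) - expect (env_hist 0 s) (play_prob j s) \<le>
        sqrt (KL (env_hist 0 s) (env_hist j s))"
      by (rule expect_diff_le_sqrt_KL) (auto simp: set_env_hist_env_indep[of j _ 0] play_prob_bounds)
    also have "\<dots> \<le> sqrt (kl_coin * expected_obs j T)"
      using assms that by (simp add: KL_env_hist mult_left_mono expected_obs_mono)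
    finally show ?thesis by simp
  qed
  then have "expected_plays j j T \<le>
      (\<Sum>s<T. expect (env_hist 0 s) (play_prob j s) + sqrt (kl_coin * expected_obs j T))"
    unfolding expected_plays_def by (intro sum_mono) auto
  then show ?thesis by (simp add: expected_plays_def sum.distrib)
qed

lemma sum_expected_plays_reference: "(\<Sum>j\<in>{1..K}. expected_plays 0 j T) = T"
proof -
  have "(\<Sum>j\<in>{1..K}. expected_plays 0 j T) =
      (\<Sum>s<T. expect (env_hist 0 s) (\<lambda>h. \<Sum>j\<in>{1..K}. play_prob j s h))"
    unfolding expected_plays_def by (subst sum.swap) (simp add: expect_sum)
  then show ?thesis by (simp only: sum_play_prob) (simp add: expect_const)
qed

lemma sum_expected_obs_le: "(\<Sum>j\<in>{1..K}. expected_obs j T) \<le> 2 * T"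
proof -
  have "(\<Sum>j\<in>{1..K}. expected_obs j T) = (\<Sum>s<T. expect (env_hist 0 s) (\<lambda>h. \<Sum>j\<in>{1..K}. obs_prob j s h))"
    unfolding expected_obs_def by (subst sum.swap) (simp add: expect_sum)
  also have "\<dots> \<le> (\<Sum>s<T. expect (env_hist 0 s) (\<lambda>_. 2))"
    by (intro sum_mono expect_mono sum_obs_prob_le)
  finally show ?thesis by (simp add: expect_const)
qed

lemma sum_expected_plays_le:
  assumes "d\<^sup>2 * T = real K / 256" "d\<^sup>2 \<le> 1/24"
  shows "(\<Sum>j\<in>{1..K}. expected_plays j j T) \<le> T + 307/2240 * real K * T"
proof -
  have kl: "0 \<le> kl_coin" "kl_coin * T \<le> 3 * real K / 320"
    using kl_coin_bounds[OF assms(2)] mult_right_mono[of kl_coin "12/5 * d\<^sup>2" "real T"] assms(1)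
    by auto
  have obs_nonneg: "0 \<le> expected_obs j T" for j
    using expected_obs_mono[of 0 T j] by (simp add: expected_obs_def)
  have "(\<Sum>j\<in>{1..K}. sqrt (kl_coin * expected_obs j T)) \<le>
      (\<Sum>j\<in>{1..K}. (7 * (kl_coin * expected_obs j T) + 1/7) / 2)"
    using kl obs_nonneg by (intro sum_mono sqrt_le_scaled_mean) auto
  also have "\<dots> = (7 * kl_coin * (\<Sum>j\<in>{1..K}. expected_obs j T) + real K / 7) / 2"
    by (simp add: sum_divide_distrib[symmetric] sum.distrib sum_distrib_left[symmetric] mult.assoc)
  also have "\<dots> \<le> (7 * kl_coin * (2 * T) + real K / 7) / 2"
    using sum_expected_obs_le kl by (intro divide_right_mono add_right_mono mult_left_mono) auto
  also have "\<dots> \<le> 307/2240 * real K" using kl(2) by (simp add: algebra_simps)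
  finally have sqrt_sum: "(\<Sum>j\<in>{1..K}. sqrt (kl_coin * expected_obs j T)) \<le> 307/2240 * real K" .
  have "(\<Sum>j\<in>{1..K}. expected_plays j j T) \<le>
      (\<Sum>j\<in>{1..K}. expected_plays 0 j T + T * sqrt (kl_coin * expected_obs j T))"
    using kl by (intro sum_mono expected_plays_le) auto
  also have "\<dots> = T + T * (\<Sum>j\<in>{1..K}. sqrt (kl_coin * expected_obs j T))"
    by (simp only: sum.distrib sum_expected_plays_reference) (simp add: sum_distrib_left)
  also have "\<dots> \<le> T + 307/2240 * real K * T"
    using mult_left_mono[OF sqrt_sum, of "real T"] by (simp add: mult_ac)
  finally show ?thesis .
qed

lemma exists_hard_loss_seq:
  assumes "2 \<le> K" "d\<^sup>2 * T = real K / 256" "d\<^sup>2 \<le> 1/24" "e \<le> 1"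
  shows "\<exists>l. losses_01 K T l \<and> loss_range_le K T l e \<and> regret K T alg l \<ge> 813/2240 * e * d * T"
proof -
  have "card {1..K} * (813/2240 * e * d * T) \<le> (\<Sum>j\<in>{1..K}. e * d * (T - expected_plays j j T))"
  proof -
    have "real T \<le> real K * T / 2" using mult_right_mono[of 2 "real K" "real T"] assms(1) by simp
    then have "813/2240 * real K * T \<le> real K * T - (\<Sum>j\<in>{1..K}. expected_plays j j T)"
      using sum_expected_plays_le[OF assms(2,3)] by linarith
    then show ?thesis
      using e_pos d_pos mult_left_mono[of _ _ "e * d"]
      by (simp add: sum_distrib_left[symmetric] sum_subtractf mult_ac)
  qed
  moreover have "{1..K} \<noteq> {}" using assms(1) by simp
  ultimately obtain j where j: "j \<in> {1..K}" and "813/2240 * e * d * T \<le> e * d * (T - expected_plays j j T)"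
    using exists_ge_average[OF finite_atLeastAtMost] by blast
  then have "813/2240 * e * d * T \<le> expect (loss_seq j T) (regret K T alg)"
    using expect_regret_ge[where T=T, OF j] by linarith
  then obtain l where l: "l \<in> set_pmf (loss_seq j T)" and "regret K T alg l \<ge> 813/2240 * e * d * T"
    using exists_ge_expect[OF finite_loss_seq] by blast
  moreover have "losses_01 K T l \<and> loss_range_le K T l e"
    using loss_seq_admissible[OF l assms(4)] .
  ultimately show ?thesis by blast
qed

end

lemma lower_bound_constant:
  fixes K T :: nat and e :: real
  assumes "0 < T" "0 \<le> e"
  shows "0.02 * e * sqrt (real K * real T) \<le> 813/2240 * e * (sqrt (real K * real T) / (16 * real T)) * T"
proof -
  have "813/2240 * e * (sqrt (real K * real T) / (16 * real T)) * T = 813/35840 * (e * sqrt (real K * real T))"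
    using assms(1) by simp
  then show ?thesis using mult_right_mono[of "0.02" "813/35840" "e * sqrt (real K * real T)"] assms(2)
    by simp
qed

theorem theorem2:
  fixes K T :: nat and eps :: real and alg :: algo
  assumes "K \<ge> 2"
    and "0 < eps" and "eps \<le> 1"
    and "real T \<ge> 3 * real K / 32"
    and "valid_algo K alg"
  shows "\<exists>l. losses_01 K T l \<and> loss_range_le K T l eps \<and>
             regret K T alg l \<ge> 0.02 * eps * sqrt (real K * real T)"
proof -
  define d where "d = sqrt (real K * real T) / (16 * real T)"
  have T: "0 < T" using assms(1,4) by linarith
  have d0: "0 < d" unfolding d_def using assms(1) T by simp
  have dT: "d\<^sup>2 * T = real K / 256"
    unfolding d_def using T by (simp add: power_divide power_mult_distrib power2_eq_square)
  have "d\<^sup>2 * (256 * real T) \<le> 1/24 * (256 * real T)" using dT assms(4) by (simp add: algebra_simps)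
  then have d24: "d\<^sup>2 \<le> 1/24" using T by simp
  then have "d < 1/2" by (intro power2_less_imp_less[of d "1/2"]) (simp_all add: power2_eq_square)
  then interpret hard_environments K alg eps d
    using assms(2,5) d0 by unfold_locales auto
  obtain l where "losses_01 K T l" "loss_range_le K T l eps" "regret K T alg l \<ge> 813/2240 * eps * d * T"
    using exists_hard_loss_seq[OF assms(1) dT d24 assms(3)] by blast
  moreover have "0.02 * eps * sqrt (real K * real T) \<le> 813/2240 * eps * d * T"
    unfolding d_def using T assms(2) by (rule lower_bound_constant[OF _ less_imp_le])
  ultimately show ?thesis by (meson order.trans)
qed

end
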